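(* Let $\mathcal{A}\subseteq 2^P$ be a connected access structure and let $\mathcal M=(f,sP)$ be a polymatroid realizing $\mathcal{A}$ such that $f(a)=f(s)=1$ for all $a\in P$. Then $\mathcal M$ is a matroid, and it is uniquely determined by $\mathcal{A}$: any two polymatroids satisfying these hypotheses for the same $\mathcal{A}$ coincide.
   Context: A polymatroid $(f,M)$ consists of a finite set $M$ and a function $f$ on subsets of $M$ with $f(\emptyset)=0$ that is non-negative, monotone and submodular; a matroid is an integer-valued polymatroid whose singletons have rank $0$ or $1$. An access structure on a finite set $P$ is a non-empty upward-closed $\mathcal{A}\subseteq 2^P$ with $\emptyset\notin\mathcal{A}$; members are qualified. A participant $i\in P$ is important if there is $A\subseteq P$, $A\notin\mathcal{A}$, with $A\cup\{i\}\in\mathcal{A}$; $\mathcal{A}$ is connected if every participant is important. Let $s\notin P$; juxtaposition denotes union. A polymatroid $(f,sP)$ realizes $\mathcal{A}$ if for every $A\subseteq P$: $A\in\mathcal{A}$ iff $f(sA)=f(A)$, and $A\notin\mathcal{A}$ iff $f(sA)=f(A)+f(s)$. *)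

theory Defs
  imports Complex_Main
begin

definition polymatroid :: "('a set \<Rightarrow> real) \<Rightarrow> 'a set \<Rightarrow> bool" where
  "polymatroid f M \<longleftrightarrow> finite M \<and> f {} = 0
     \<and> (\<forall>X. X \<subseteq> M \<longrightarrow> 0 \<le> f X)
     \<and> (\<forall>X Y. X \<subseteq> Y \<and> Y \<subseteq> M \<longrightarrow> f X \<le> f Y)
     \<and> (\<forall>X Y. X \<subseteq> M \<and> Y \<subseteq> M \<longrightarrow> f (X \<union> Y) + f (X \<inter> Y) \<le> f X + f Y)"

definition matroid :: "('a set \<Rightarrow> real) \<Rightarrow> 'a set \<Rightarrow> bool" where
  "matroid f M \<longleftrightarrow> polymatroid f M
     \<and> (\<forall>X. X \<subseteq> M \<longrightarrow> f X \<in> \<int>)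
     \<and> (\<forall>x\<in>M. f {x} = 0 \<or> f {x} = 1)"

definition access_structure :: "'a set \<Rightarrow> 'a set set \<Rightarrow> bool" where
  "access_structure P \<A> \<longleftrightarrow> \<A> \<subseteq> Pow P \<and> \<A> \<noteq> {} \<and> {} \<notin> \<A>
     \<and> (\<forall>A B. A \<in> \<A> \<and> A \<subseteq> B \<and> B \<subseteq> P \<longrightarrow> B \<in> \<A>)"

definition important :: "'a set \<Rightarrow> 'a set set \<Rightarrow> 'a \<Rightarrow> bool" where
  "important P \<A> i \<longleftrightarrow> i \<in> P \<and> (\<exists>A. A \<subseteq> P \<and> A \<notin> \<A> \<and> insert i A \<in> \<A>)"

definition connected_access_structure :: "'a set \<Rightarrow> 'a set set \<Rightarrow> bool" where
  "connected_access_structure P \<A> \<longleftrightarrow> access_structure P \<A> \<and> (\<forall>i\<in>P. important P \<A> i)"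

definition realizes :: "('a set \<Rightarrow> real) \<Rightarrow> 'a \<Rightarrow> 'a set \<Rightarrow> 'a set set \<Rightarrow> bool" where
  "realizes f s P \<A> \<longleftrightarrow> (\<forall>A. A \<subseteq> P \<longrightarrow>
      (A \<in> \<A> \<longleftrightarrow> f (insert s A) = f A)
    \<and> (A \<notin> \<A> \<longleftrightarrow> f (insert s A) = f A + f {s}))"

end

theory Submission
  imports Defs
begin

text \<open>Adding the secret to an unqualified set raises the rank by one and to a qualified set
  by nothing. By submodularity, a participant completing an unqualified subset of Y to a
  qualified set acts on Y exactly as the secret does. Connectivity provides, for every
  nonempty X \<subseteq> P, such a participant x \<in> X and a set W, both depending on the access structure
  only, with f X = f (X - {x}) + [W unqualified]. Together with the recursion for the secret,
  f is computed on every subset by increments 0 or 1 from f {} = 0, so f is integral and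
  determined by the access structure.\<close>

lemma exists_minimal_subset_in:
  assumes "finite T" "T \<in> \<A>"
  shows "\<exists>D\<subseteq>T. D \<in> \<A> \<and> (\<forall>y\<in>D. D - {y} \<notin> \<A>)"
  using assms
proof (induction T rule: finite_psubset_induct)
  case (psubset T)
  show ?case
  proof (cases "\<forall>y\<in>T. T - {y} \<notin> \<A>")
    case True
    then show ?thesis using psubset.prems by blast
  next
    case False
    then obtain y where "y \<in> T" "T - {y} \<in> \<A>" by blast
    then have "\<exists>D\<subseteq>T - {y}. D \<in> \<A> \<and> (\<forall>y\<in>D. D - {y} \<notin> \<A>)"
      by (intro psubset.IH) auto
    then show ?thesis by blast
  qed
qed

lemma connected_access_structure_critical_extension:
  assumes fin: "finite P" and conn: "connected_access_structure P \<A>"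
    and X: "X \<subseteq> P" "X \<noteq> {}"
  obtains x Z A where "x \<in> X" "Z \<subseteq> P" "Z \<inter> X = {}" "A \<subseteq> (X - {x}) \<union> Z"
    "A \<notin> \<A>" "insert x A \<in> \<A>" "X \<union> Z \<in> \<A>"
    "\<And>T. T \<subseteq> X \<union> Z \<Longrightarrow> T \<in> \<A> \<Longrightarrow> Z \<subseteq> T"
proof -
  have up: "B \<in> \<A>" if "A \<in> \<A>" "A \<subseteq> B" "B \<subseteq> P" for A B
    using conn that unfolding connected_access_structure_def access_structure_def by blast
  define \<D> where "\<D> = {D. D \<subseteq> P \<and> D \<in> \<A> \<and> (\<exists>y\<in>D \<inter> X. D - {y} \<notin> \<A>)}"
  obtain x0 where x0: "x0 \<in> X" using X by blast
  then have "important P \<A> x0"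
    using conn X unfolding connected_access_structure_def by blast
  then obtain A0 where A0: "A0 \<subseteq> P" "A0 \<notin> \<A>" "insert x0 A0 \<in> \<A>"
    unfolding important_def by blast
  then have "insert x0 A0 - {x0} \<notin> \<A>"
    by (metis Diff_insert_absorb insert_absorb)
  then have "insert x0 A0 \<in> \<D>" using A0 x0 X unfolding \<D>_def by blast
  then obtain D where "D \<in> \<D>" and D_min: "\<And>D'. D' \<in> \<D> \<Longrightarrow> card (D - X) \<le> card (D' - X)"
    using ex_has_least_nat[of "\<lambda>D. D \<in> \<D>" _ "\<lambda>D. card (D - X)"] by blast
  then obtain x where D: "D \<subseteq> P" "D \<in> \<A>" "x \<in> D" "x \<in> X" "D - {x} \<notin> \<A>"
    unfolding \<D>_def by blast
  define Z where "Z = D - X"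
  have Z: "Z \<subseteq> P" "Z \<inter> X = {}"
    using D(1) unfolding Z_def by auto
  have finZ: "finite Z" using Z(1) fin by (rule finite_subset)
  have "D \<subseteq> X \<union> Z" "X \<union> Z \<subseteq> P" using X(1) Z(1) unfolding Z_def by auto
  then have "X \<union> Z \<in> \<A>" using up[OF D(2)] by blast
  moreover have "Z \<subseteq> T" if T: "T \<subseteq> X \<union> Z" "T \<in> \<A>" for T
  proof (rule ccontr)
    assume "\<not> Z \<subseteq> T"
    then obtain z where z: "z \<in> Z" "z \<notin> T" by blast
    have "T \<subseteq> P" using T(1) X(1) Z(1) by blast
    then have "finite T" using fin by (rule finite_subset)
    then obtain D' where D': "D' \<subseteq> T" "D' \<in> \<A>" "\<forall>y\<in>D'. D' - {y} \<notin> \<A>"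
      using exists_minimal_subset_in[OF _ T(2)] by blast
    show False
    proof (cases "D' \<inter> X = {}")
      case False
      then obtain y where "y \<in> D' \<inter> X" by blast
      then have "D' \<in> \<D>" using D' \<open>T \<subseteq> P\<close> unfolding \<D>_def by blast
      then have "card Z \<le> card (D' - X)" using D_min unfolding Z_def by blast
      also have "\<dots> \<le> card (Z - {z})" using D'(1) T(1) z finZ by (intro card_mono) auto
      also have "\<dots> < card Z" using card_Diff1_less[OF finZ z(1)] .
      finally show False by simp
    next
      case True
      then have "D' \<subseteq> D - {x}" using D'(1) T(1) D(4) unfolding Z_def by blast
      then show False using up[OF D'(2)] D(1,5) by blast
    qed
  qed
  moreover have "D - {x} \<subseteq> (X - {x}) \<union> Z" "insert x (D - {x}) = D"
    using D(3) unfolding Z_def by blast+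
  ultimately show thesis using that[of x Z "D - {x}"] D Z by simp
qed

lemma functions_determined_by_common_increments:
  fixes F :: "('a set \<Rightarrow> real) set"
  assumes "finite Q"
    and empty: "\<And>h. h \<in> F \<Longrightarrow> h {} = 0"
    and step: "\<And>Y. Y \<subseteq> Q \<Longrightarrow> Y \<noteq> {} \<Longrightarrow> \<exists>y\<in>Y. \<exists>d\<in>\<int>. \<forall>h\<in>F. h Y = h (Y - {y}) + d"
    and f: "f \<in> F" and "X \<subseteq> Q"
  shows "f X \<in> \<int> \<and> (\<forall>g\<in>F. g X = f X)"
proof -
  have "finite X" using \<open>X \<subseteq> Q\<close> \<open>finite Q\<close> by (rule finite_subset)
  then show ?thesis using \<open>X \<subseteq> Q\<close>
  proof (induction X rule: finite_psubset_induct)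
    case (psubset X)
    show ?case
    proof (cases "X = {}")
      case True
      then show ?thesis using empty[OF f] empty by simp
    next
      case False
      obtain y d where y: "y \<in> X" "d \<in> \<int>" and inc: "\<forall>h\<in>F. h X = h (X - {y}) + d"
        using step[OF psubset.prems False] by blast
      have IH: "f (X - {y}) \<in> \<int> \<and> (\<forall>g\<in>F. g (X - {y}) = f (X - {y}))"
        using y(1) psubset.prems by (intro psubset.IH) auto
      have "f X = f (X - {y}) + d" using inc f by blast
      then have "f X \<in> \<int>" using IH y(2) by simp
      moreover have "g X = f X" if "g \<in> F" for g
        using inc IH that \<open>f X = f (X - {y}) + d\<close> by simp
      ultimately show ?thesis by blast
    qed
  qed
qed

locale unit_realization =
  fixes h :: "'a set \<Rightarrow> real" and s :: 'a and P :: "'a set" and \<A> :: "'a set set"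
  assumes polymatroid: "polymatroid h (insert s P)"
    and realizes: "realizes h s P \<A>"
    and secret_rank: "h {s} = 1"
    and participant_rank_le: "\<And>a. a \<in> P \<Longrightarrow> h {a} \<le> 1"
    and secret_notin: "s \<notin> P"
    and finite_participants: "finite P"
begin

lemma empty: "h {} = 0"
  using polymatroid unfolding polymatroid_def by blast

lemma nonneg: "X \<subseteq> insert s P \<Longrightarrow> 0 \<le> h X"
  using polymatroid unfolding polymatroid_def by blast

lemma mono: "X \<subseteq> Y \<Longrightarrow> Y \<subseteq> insert s P \<Longrightarrow> h X \<le> h Y"
  using polymatroid unfolding polymatroid_def by blast

lemma submodular:
  assumes "X \<subseteq> insert s P" "Y \<subseteq> insert s P" "X \<union> Y = U" "X \<inter> Y = I"
  shows "h U + h I \<le> h X + h Y"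
proof -
  have "h (X \<union> Y) + h (X \<inter> Y) \<le> h X + h Y"
    using polymatroid assms(1,2) unfolding polymatroid_def by blast
  then show ?thesis using assms(3,4) by simp
qed

lemma insert_le:
  assumes "X \<subseteq> P" "a \<in> P"
  shows "h (insert a X) \<le> h X + 1"
proof -
  have "h (insert a X) + h (X \<inter> {a}) \<le> h X + h {a}"
    using assms by (intro submodular) auto
  moreover have "0 \<le> h (X \<inter> {a})"
    using assms(1) by (intro nonneg) auto
  ultimately show ?thesis using participant_rank_le[OF assms(2)] by linarith
qed

lemma rank_insert_secret:
  assumes "X \<subseteq> P"
  shows "h (insert s X) = h X + (if X \<in> \<A> then 0 else 1)"
  using realizes assms secret_rank unfolding realizes_def by auto

lemma insert_completing_eq_insert_secret:
  assumes A: "A \<subseteq> Y" "A \<notin> \<A>" "insert x A \<in> \<A>" and Y: "Y \<subseteq> P" "x \<in> P" "x \<notin> Y"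
  shows "h (insert x Y) = h (insert s Y)"
proof -
  have AP: "A \<subseteq> P" using A(1) Y(1) by blast
  have "h (insert s A) = h A + 1" using rank_insert_secret[OF AP] A(2) by simp
  moreover have "h (insert s (insert x A)) = h (insert x A)"
    using rank_insert_secret[of "insert x A"] AP Y(2) A(3) by simp
  moreover have "h (insert x A) \<le> h A + 1" using insert_le AP Y(2) by blast
  moreover have "h (insert s A) \<le> h (insert s (insert x A))" using AP Y(2) by (intro mono) auto
  text \<open>So on A, adding x, adding s and adding both all give the same rank; submodularity
    carries the first two of these equalities from A up to Y.\<close>
  ultimately have sxA: "h (insert s (insert x A)) = h (insert s A)"
    and xA: "h (insert x A) = h (insert s A)" by linarith+
  have "h (insert s (insert x Y)) + h (insert s A) \<le> h (insert s Y) + h (insert s (insert x A))"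
    using A(1) Y by (intro submodular) auto
  moreover have "h (insert s (insert x Y)) + h (insert x A) \<le> h (insert x Y) + h (insert s (insert x A))"
    using A(1) Y secret_notin by (intro submodular) auto
  moreover have "h (insert s Y) \<le> h (insert s (insert x Y))"
    using Y by (intro mono) auto
  moreover have "h (insert x Y) \<le> h (insert s (insert x Y))"
    using Y by (intro mono) auto
  ultimately show ?thesis using sxA xA by linarith
qed

lemma rank_remove_critical_element:
  assumes "T \<subseteq> P" "T \<in> \<A>" "z \<in> T" "T - {z} \<notin> \<A>"
  shows "h (T - {z}) = h T - 1"
proof -
  have "h (insert z (T - {z})) = h (insert s (T - {z}))"
    using assms by (intro insert_completing_eq_insert_secret) (auto simp: insert_absorb)
  moreover have "T - {z} \<subseteq> P" using assms(1) by blast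
  ultimately show ?thesis
    using rank_insert_secret[of "T - {z}"] assms(3,4) by (simp add: insert_absorb)
qed

lemma rank_remove_critical_set:
  assumes T: "T \<subseteq> P" "T \<in> \<A>" and B: "B \<subseteq> T" "\<And>z. z \<in> B \<Longrightarrow> T - {z} \<notin> \<A>"
  shows "h (T - B) = h T - card B"
proof -
  have "B \<subseteq> P" using B(1) T(1) by blast
  then have "finite B" using finite_participants by (rule finite_subset)
  then show ?thesis using B
  proof (induction B rule: finite_induct)
    case empty
    show ?case by simp
  next
    case (insert z B)
    have IH: "h (T - B) = h T - card B" using insert.prems by (intro insert.IH) auto
    have z: "z \<in> T" "T - {z} \<notin> \<A>" using insert.prems by auto
    have "h T + h (T - insert z B) \<le> h (T - B) + h (T - {z})"
      using T(1) z(1) insert.hyps(2) by (intro submodular) auto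
    moreover have "insert z (T - insert z B) = T - B" using z(1) insert.hyps(2) by blast
    then have "h (T - B) \<le> h (T - insert z B) + 1"
      using insert_le[of "T - insert z B" z] T(1) z(1) by auto
    moreover have "h (T - {z}) = h T - 1" using rank_remove_critical_element T z by blast
    ultimately show ?case using IH insert.hyps by simp
  qed
qed

lemma rank_Diff_element:
  assumes X: "X \<subseteq> P" "x \<in> X" and Z: "Z \<subseteq> P" "Z \<inter> X = {}"
    and A: "A \<subseteq> (X - {x}) \<union> Z" "A \<notin> \<A>" "insert x A \<in> \<A>"
    and XZ: "X \<union> Z \<in> \<A>" and qualified_contains: "\<And>T. T \<subseteq> X \<union> Z \<Longrightarrow> T \<in> \<A> \<Longrightarrow> Z \<subseteq> T"
  shows "h X = h (X - {x}) + (if (X - {x}) \<union> Z \<in> \<A> then 0 else 1)"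
proof -
  define W where "W = (X - {x}) \<union> Z"
  have WP: "W \<subseteq> P" using X Z unfolding W_def by blast
  have "h (insert x W) = h (insert s W)"
    using A X Z WP unfolding W_def by (intro insert_completing_eq_insert_secret) auto
  moreover have "insert x W = X \<union> Z" using X(2) unfolding W_def by blast
  ultimately have XZ_rank: "h (X \<union> Z) = h W + (if W \<in> \<A> then 0 else 1)"
    using rank_insert_secret[OF WP] by simp
  have unqualified: "T - {z} \<notin> \<A>" if "T \<subseteq> X \<union> Z" "z \<in> Z" for T z
    using qualified_contains[of "T - {z}"] that by blast
  have "h ((X \<union> Z) - Z) = h (X \<union> Z) - card Z"
    using X(1) Z(1) XZ unqualified by (intro rank_remove_critical_set) auto
  moreover have "(X \<union> Z) - Z = X" using Z(2) by blast
  ultimately have X_rank: "h X = h (X \<union> Z) - card Z" by simp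
  show ?thesis
  proof (cases "W \<in> \<A>")
    case True
    have "h (W - Z) = h W - card Z"
    proof (rule rank_remove_critical_set[OF WP True])
      show "Z \<subseteq> W" unfolding W_def by blast
      show "W - {z} \<notin> \<A>" if "z \<in> Z" for z
        using unqualified[of W z] that unfolding W_def by blast
    qed
    moreover have "W - Z = X - {x}" using Z(2) unfolding W_def by blast
    ultimately show ?thesis using X_rank XZ_rank True unfolding W_def by simp
  next
    case False
    have "h (X \<union> Z) + h (X - {x}) \<le> h X + h W"
      using X Z WP unfolding W_def by (intro submodular) auto
    moreover have "h (insert x (X - {x})) \<le> h (X - {x}) + 1"
      using X by (intro insert_le) auto
    ultimately show ?thesis using XZ_rank False X(2) unfolding W_def by (simp add: insert_absorb)
  qed
qed

end

lemma unit_realizations_common_increments: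
  assumes fin: "finite P" and conn: "connected_access_structure P \<A>"
    and X: "X \<subseteq> insert s P" "X \<noteq> {}"
  shows "\<exists>x\<in>X. \<exists>d\<in>\<int>. \<forall>g. unit_realization g s P \<A> \<longrightarrow> g X = g (X - {x}) + d"
proof (cases "s \<in> X")
  case True
  have "g X = g (X - {s}) + (if X - {s} \<in> \<A> then 0 else 1)" if "unit_realization g s P \<A>" for g
    using unit_realization.rank_insert_secret[OF that, of "X - {s}"] X(1) True
    by (simp add: insert_absorb subset_insert_iff)
  then show ?thesis
    using True by (intro bexI[of _ s] bexI[of _ "if X - {s} \<in> \<A> then 0 else 1"]) auto
next
  case False
  then have XP: "X \<subseteq> P" using X(1) by blast
  obtain x Z A where x: "x \<in> X" and "Z \<subseteq> P" "Z \<inter> X = {}" "A \<subseteq> (X - {x}) \<union> Z"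
    "A \<notin> \<A>" "insert x A \<in> \<A>" "X \<union> Z \<in> \<A>" "\<And>T. T \<subseteq> X \<union> Z \<Longrightarrow> T \<in> \<A> \<Longrightarrow> Z \<subseteq> T"
    using connected_access_structure_critical_extension[OF fin conn XP X(2)] by blast
  then have "g X = g (X - {x}) + (if (X - {x}) \<union> Z \<in> \<A> then 0 else 1)"
    if "unit_realization g s P \<A>" for g
    using unit_realization.rank_Diff_element[OF that XP] by blast
  then show ?thesis
    using x by (intro bexI[of _ x] bexI[of _ "if (X - {x}) \<union> Z \<in> \<A> then 0 else 1"]) auto
qed

theorem theorem3p4:
  fixes P :: "'a set" and s :: 'a and \<A> :: "'a set set" and f :: "'a set \<Rightarrow> real"
  assumes "finite P" and "s \<notin> P"
    and "connected_access_structure P \<A>"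
    and "polymatroid f (insert s P)" and "realizes f s P \<A>"
    and "f {s} = 1" and "\<forall>a\<in>P. f {a} = 1"
  shows "matroid f (insert s P)
    \<and> (\<forall>g :: 'a set \<Rightarrow> real. polymatroid g (insert s P) \<and> realizes g s P \<A>
          \<and> g {s} = 1 \<and> (\<forall>a\<in>P. g {a} = 1)
          \<longrightarrow> (\<forall>X. X \<subseteq> insert s P \<longrightarrow> g X = f X))"
proof -
  let ?F = "{g. unit_realization g s P \<A>}"
  have unit: "unit_realization g s P \<A>"
    if "polymatroid g (insert s P)" "realizes g s P \<A>" "g {s} = 1" "\<forall>a\<in>P. g {a} = 1" for g
    using that assms(1,2) by unfold_locales auto
  have f: "f \<in> ?F" using unit assms(4-7) by blast
  have determined: "f X \<in> \<int> \<and> (\<forall>g\<in>?F. g X = f X)" if "X \<subseteq> insert s P" for X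
  proof (rule functions_determined_by_common_increments[OF _ _ _ f that])
    show "finite (insert s P)" using assms(1) by simp
    show "h {} = 0" if "h \<in> ?F" for h
      using that by (simp add: unit_realization.empty[of h s P \<A>])
    show "\<exists>y\<in>Y. \<exists>d\<in>\<int>. \<forall>h\<in>?F. h Y = h (Y - {y}) + d"
      if "Y \<subseteq> insert s P" "Y \<noteq> {}" for Y
      using unit_realizations_common_increments[OF assms(1,3) that] by simp
  qed
  have "matroid f (insert s P)"
    unfolding matroid_def using assms(4,6,7) determined by auto
  then show ?thesis using determined unit by blast
qed

end
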